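(* Let $\mathcal{I}$ be a $\sigma$-ideal on $\mathbb{R}$ satisfying the standing assumptions. If an $\mathcal{I}$-Luzin set exists, then there exists a strong $\mathcal{I}$-Luzin set which is linearly independent over $\mathbb{Q}$.
   Context: Standing assumptions on $\mathcal{I}$: $\mathcal{I}$ is a $\sigma$-ideal of subsets of $\mathbb{R}$ such that $\mathbb{R}\notin\mathcal{I}$; $x+I\in\mathcal{I}$ and $xI\in\mathcal{I}$ for all $x\in\mathbb{R}$, $I\in\mathcal{I}$; every member of $\mathcal{I}$ is contained in a Borel member of $\mathcal{I}$; and for all Borel $A,B\notin\mathcal{I}$ the set $A-B$ has nonempty interior. A set $L\subseteq\mathbb{R}$ is $\mathcal{I}$-Luzin if $|L|=\mathfrak{c}$ and $L\cap I$ is countable for every $I\in\mathcal{I}$; it is strong $\mathcal{I}$-Luzin if moreover $L\cap B$ is uncountable for every Borel set $B\notin\mathcal{I}$. *)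

theory Defs
  imports "HOL-Analysis.Analysis" "HOL-Library.Equipollence"
begin

definition sigma_ideal :: "real set set \<Rightarrow> bool" where
  "sigma_ideal J \<longleftrightarrow>
     {} \<in> J \<and>
     (\<forall>A\<in>J. \<forall>B. B \<subseteq> A \<longrightarrow> B \<in> J) \<and>
     (\<forall>F. countable F \<and> F \<subseteq> J \<longrightarrow> \<Union>F \<in> J)"

definition set_diff_minus :: "real set \<Rightarrow> real set \<Rightarrow> real set" where
  "set_diff_minus A B = {a - b | a b. a \<in> A \<and> b \<in> B}"

definition standing_ideal :: "real set set \<Rightarrow> bool" where
  "standing_ideal J \<longleftrightarrow>
     sigma_ideal J \<and>
     (UNIV :: real set) \<notin> J \<and>
     (\<forall>x. \<forall>A\<in>J. (\<lambda>y. x + y) ` A \<in> J \<and> (\<lambda>y. x * y) ` A \<in> J) \<and>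
     (\<forall>A\<in>J. \<exists>B. B \<in> sets borel \<and> B \<in> J \<and> A \<subseteq> B) \<and>
     (\<forall>A B. A \<in> sets borel \<longrightarrow> B \<in> sets borel \<longrightarrow> A \<notin> J \<longrightarrow> B \<notin> J \<longrightarrow>
        interior (set_diff_minus A B) \<noteq> {})"

definition ideal_Luzin :: "real set set \<Rightarrow> real set \<Rightarrow> bool" where
  "ideal_Luzin J L \<longleftrightarrow> L \<approx> (UNIV :: real set) \<and> (\<forall>A\<in>J. countable (L \<inter> A))"

definition strong_ideal_Luzin :: "real set set \<Rightarrow> real set \<Rightarrow> bool" where
  "strong_ideal_Luzin J L \<longleftrightarrow> ideal_Luzin J L \<and>
     (\<forall>B. B \<in> sets borel \<longrightarrow> B \<notin> J \<longrightarrow> uncountable (L \<inter> B))"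

definition Q_linearly_independent :: "real set \<Rightarrow> bool" where
  "Q_linearly_independent L \<longleftrightarrow>
     (\<forall>F c. finite F \<longrightarrow> F \<subseteq> L \<longrightarrow> (\<forall>x\<in>F. c x \<in> \<rat>) \<longrightarrow>
        (\<Sum>x\<in>F. c x * x) = 0 \<longrightarrow> (\<forall>x\<in>F. c x = 0))"

end

theory Submission
  imports Defs
begin

text \<open>
  Replacing a Luzin set \<open>L\<close> by \<open>\<rat> + L\<close> keeps it Luzin, and makes it meet every non-null Borel
  set \<open>B\<close> in continuum many points: the complement of \<open>\<rat> + B\<close> is null, since a non-null Borel
  \<open>C\<close> disjoint from \<open>\<rat> + B\<close> would make \<open>C - B\<close> an open set missing \<open>\<rat>\<close>.
  There are at most continuum many Borel sets, so the non-null ones can be listed along the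
  continuum, each of them occurring continuum many times. A transfinite recursion along this list
  picks a point of \<open>\<rat> + L\<close> in the current set outside the \<open>\<rat>\<close>-span of the earlier points; that
  span has size less than continuum, so the choice is always possible.
\<close>

unbundle cardinal_syntax

lemma card_of_le_infinite_if_countable:
  assumes "countable A" "infinite B"
  shows "|A| \<le>o |B|"
  using assms card_of_ordLeq[of A "UNIV::nat set"] infinite_iff_card_of_nat[of B]
    ordLeq_transitive unfolding countable_def by blast

lemma card_of_less_real_if_countable:
  assumes "countable A"
  shows "|A| <o |UNIV::real set|"
proof -
  have "|A| \<le>o |UNIV::nat set|"
    using assms card_of_ordLeq[of A "UNIV::nat set"] unfolding countable_def by blast
  moreover have "|UNIV::nat set| <o |UNIV::real set|"
    using uncountable_UNIV_real card_of_ordLess[of "UNIV::real set" "UNIV::nat set"]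
    unfolding countable_def by blast
  ultimately show ?thesis by (rule ordLeq_ordLess_trans)
qed

lemma (in wo_rel) finite_has_greatest:
  assumes "finite A" "A \<noteq> {}" "A \<subseteq> Field r"
  shows "\<exists>a\<in>A. \<forall>b\<in>A. (b, a) \<in> r"
  using assms
proof (induction A rule: finite_ne_induct)
  case (singleton x)
  then have "(x, x) \<in> r" using REFL refl_onD by fastforce
  then show ?case by simp
next
  case (insert x F)
  then obtain a where a: "a \<in> F" "\<forall>b\<in>F. (b, a) \<in> r" by auto
  let ?m = "max2 x a"
  have "a \<in> Field r" "x \<in> Field r" using a(1) insert.prems by auto
  then have m: "(x, ?m) \<in> r" "(a, ?m) \<in> r" "?m \<in> insert x F"
    using max2_greater_among[of x a] a(1) by auto
  have "(b, ?m) \<in> r" if "b \<in> F" for b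
    using a(2) that m(2) TRANS by (meson transD)
  then show ?case using m by blast
qed

section \<open>Rational translates\<close>

lemma ideal_Luzin_subset:
  assumes "ideal_Luzin J S" "X \<subseteq> S" "X \<approx> (UNIV::real set)"
  shows "ideal_Luzin J X"
proof -
  have "countable (X \<inter> A)" if "A \<in> J" for A
  proof (rule countable_subset)
    show "X \<inter> A \<subseteq> S \<inter> A" using assms(2) by blast
    show "countable (S \<inter> A)" using assms(1) that unfolding ideal_Luzin_def by blast
  qed
  then show ?thesis using assms(3) unfolding ideal_Luzin_def by blast
qed

definition rat_translates :: "real set \<Rightarrow> real set" where
  "rat_translates A = (\<Union>q\<in>\<rat>. (\<lambda>y. q + y) ` A)"

lemma mem_rat_translates_iff: "x \<in> rat_translates A \<longleftrightarrow> (\<exists>q\<in>\<rat>. x - q \<in> A)"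
proof -
  have "x \<in> (\<lambda>y. q + y) ` A \<longleftrightarrow> x - q \<in> A" for q
    by (auto intro: image_eqI[of _ _ "x - q"])
  then show ?thesis unfolding rat_translates_def by blast
qed

lemma subset_rat_translates: "A \<subseteq> rat_translates A"
  by (metis Rats_0 diff_zero mem_rat_translates_iff subsetI)

lemma sets_borel_rat_translates:
  assumes "A \<in> sets borel"
  shows "rat_translates A \<in> sets borel"
proof -
  have "rat_translates A = (\<Union>q\<in>\<rat>. (\<lambda>y. y - q) -` A \<inter> space borel)"
    by (auto simp: mem_rat_translates_iff)
  also have "\<dots> \<in> sets borel"
    by (intro sets.countable_UN'' countable_rat measurable_sets[OF _ assms]) measurable
  finally show ?thesis .
qed

lemma countable_rat_translates: "countable A \<Longrightarrow> countable (rat_translates A)"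
  unfolding rat_translates_def by (intro countable_UN[OF countable_rat] countable_image)

lemma card_of_rat_translates_le:
  assumes "infinite A"
  shows "|rat_translates A| \<le>o |A|"
proof -
  have "rat_translates A = (\<lambda>(q, a). q + a) ` (\<rat> \<times> A)"
    unfolding rat_translates_def by auto
  moreover have "|\<rat> \<times> A| =o |A|"
    using card_of_Times_infinite[OF assms, of \<rat>]
      card_of_le_infinite_if_countable[OF countable_rat assms] by auto
  ultimately show ?thesis using card_of_image ordLeq_ordIso_trans by metis
qed

lemma compl_rat_translates_in_ideal:
  assumes J: "standing_ideal J" and B: "B \<in> sets borel" "B \<notin> J"
  shows "- rat_translates B \<in> J"
proof (rule ccontr)
  let ?C = "- rat_translates B"
  assume "?C \<notin> J"
  moreover have "?C \<in> sets borel" using sets_borel_rat_translates[OF B(1)] by auto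
  ultimately have "interior (set_diff_minus ?C B) \<noteq> {}"
    using J B unfolding standing_ideal_def by blast
  then have "interior (set_diff_minus ?C B) \<inter> \<rat> \<noteq> {}"
    by (metis Int_UNIV_right open_Int_closure_eq_empty open_interior Rats_closure_real)
  then obtain q a b where "q \<in> \<rat>" "q = a - b" "a \<in> ?C" "b \<in> B"
    using interior_subset unfolding set_diff_minus_def by blast
  then show False by (auto simp: mem_rat_translates_iff)
qed

lemma ideal_Luzin_rat_translates:
  assumes J: "standing_ideal J" and L: "ideal_Luzin J L"
  shows "ideal_Luzin J (rat_translates L)"
  unfolding ideal_Luzin_def
proof safe
  have "(UNIV::real set) \<lesssim> rat_translates L"
    using L subset_rat_translates[of L] unfolding ideal_Luzin_def
    by (meson eqpoll_sym lepoll_trans1 subset_imp_lepoll)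
  then show "rat_translates L \<approx> (UNIV::real set)"
    by (simp add: lepoll_antisym subset_imp_lepoll)
next
  fix A assume "A \<in> J"
  then have "countable (L \<inter> (\<lambda>y. - q + y) ` A)" for q
    using J L unfolding standing_ideal_def ideal_Luzin_def by blast
  moreover have "rat_translates L \<inter> A = (\<Union>q\<in>\<rat>. (\<lambda>y. q + y) ` (L \<inter> (\<lambda>y. - q + y) ` A))"
    unfolding rat_translates_def by force
  ultimately show "countable (rat_translates L \<inter> A)"
    by (auto intro: countable_rat)
qed

lemma card_of_rat_translates_Int:
  assumes J: "standing_ideal J" and L: "ideal_Luzin J L"
    and B: "B \<in> sets borel" "B \<notin> J"
  shows "|rat_translates L \<inter> B| =o |UNIV::real set|"
proof -
  define T where "T = rat_translates L \<inter> B"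
  define C where "C = - rat_translates B"
  have cover: "L \<subseteq> (L \<inter> C) \<union> rat_translates T"
  proof
    fix x assume "x \<in> L"
    show "x \<in> (L \<inter> C) \<union> rat_translates T"
    proof (cases "x \<in> rat_translates B")
      case True
      then obtain q where "q \<in> \<rat>" "x - q \<in> B" by (auto simp: mem_rat_translates_iff)
      moreover have "x - q \<in> rat_translates L"
        using \<open>x \<in> L\<close> \<open>q \<in> \<rat>\<close> by (auto simp: mem_rat_translates_iff intro!: bexI[of _ "- q"])
      ultimately show ?thesis unfolding T_def by (auto simp: mem_rat_translates_iff)
    qed (use \<open>x \<in> L\<close> in \<open>simp add: C_def\<close>)
  qed
  have "countable (L \<inter> C)"
    using L compl_rat_translates_in_ideal[OF J B] unfolding C_def ideal_Luzin_def by blast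
  have L_big: "|UNIV::real set| \<le>o |L|"
    using L unfolding ideal_Luzin_def eqpoll_iff_card_of_ordIso
    using ordIso_iff_ordLeq ordIso_symmetric by blast
  have "infinite T"
  proof
    assume "finite T"
    then have "countable L"
      using cover \<open>countable (L \<inter> C)\<close> countable_rat_translates countable_subset
      by (metis countable_Un countable_finite)
    then show False
      using L_big card_of_less_real_if_countable not_ordLess_ordLeq by blast
  qed
  then have "|(L \<inter> C) \<union> rat_translates T| \<le>o |T|"
    using card_of_Un_ordLeq_infinite_Field[of "|T|", OF _
        card_of_le_infinite_if_countable[OF \<open>countable (L \<inter> C)\<close>]
        card_of_rat_translates_le card_of_Card_order]
    by (simp add: Field_card_of)
  then have "|UNIV::real set| \<le>o |T|"
    using L_big cover card_of_mono1 ordLeq_transitive by metis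
  then show ?thesis
    unfolding T_def by (simp add: ordIso_iff_ordLeq card_of_mono1)
qed

section \<open>There are at most continuum many Borel sets\<close>

datatype borel_code =
  Code_Empty | Code_Basic nat | Code_Compl borel_code | Code_Union "nat \<Rightarrow> borel_code"

text \<open>A code as a countably branching labelled tree: the label of the node at a given path.\<close>
primrec code_labels :: "borel_code \<Rightarrow> nat list \<Rightarrow> nat" where
  "code_labels Code_Empty = (\<lambda>p. 0)"
| "code_labels (Code_Basic n) = (\<lambda>p. n + 3)"
| "code_labels (Code_Compl c) = (\<lambda>p. case p of [] \<Rightarrow> 1 | i # q \<Rightarrow> code_labels c q)"
| "code_labels (Code_Union f) = (\<lambda>p. case p of [] \<Rightarrow> 2 | i # q \<Rightarrow> code_labels (f i) q)"

lemma inj_code_labels: "inj code_labels"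
proof -
  have "code_labels c = code_labels d \<Longrightarrow> c = d" for c d
  proof (induction c arbitrary: d)
    case (Code_Compl c)
    then obtain e where e: "d = Code_Compl e"
      by (cases d) (auto dest: fun_cong[of _ _ "[]"])
    have "code_labels c = code_labels e"
    proof
      fix q show "code_labels c q = code_labels e q"
        using fun_cong[OF Code_Compl.prems, of "0 # q"] e by simp
    qed
    then show ?case using Code_Compl.IH e by simp
  next
    case (Code_Union f)
    then obtain g where g: "d = Code_Union g"
      by (cases d) (auto dest: fun_cong[of _ _ "[]"])
    have "code_labels (f i) = code_labels (g i)" for i
    proof
      fix q show "code_labels (f i) q = code_labels (g i) q"
        using fun_cong[OF Code_Union.prems, of "i # q"] g by simp
    qed
    then show ?case using Code_Union.IH g by auto
  qed (case_tac d; auto dest: fun_cong[of _ _ "[]"])+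
  then show ?thesis by (rule injI)
qed

lemma borel_code_lepoll_real: "(UNIV::borel_code set) \<lesssim> (UNIV::real set)"
proof -
  define graph where "graph f = to_nat ` range (\<lambda>p. (p, f p))" for f :: "nat list \<Rightarrow> nat"
  have "inj graph"
    by (rule injI) (auto simp: graph_def inj_image_eq_iff[OF inj_to_nat] fun_eq_iff)
  then have "inj (graph \<circ> code_labels)"
    using inj_code_labels by (rule inj_compose)
  then have "(UNIV::borel_code set) \<lesssim> (UNIV::nat set set)"
    unfolding lepoll_def by blast
  also have "\<dots> \<lesssim> (UNIV::real set)"
    using nat_sets_eqpoll_reals by (rule eqpoll_imp_lepoll)
  finally show ?thesis .
qed

primrec code_eval :: "'a set set \<Rightarrow> borel_code \<Rightarrow> 'a set" where
  "code_eval \<B> Code_Empty = {}"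
| "code_eval \<B> (Code_Basic n) = from_nat_into \<B> n"
| "code_eval \<B> (Code_Compl c) = - code_eval \<B> c"
| "code_eval \<B> (Code_Union f) = (\<Union>i. code_eval \<B> (f i))"

lemma sigma_sets_subset_range_code_eval:
  assumes "countable \<B>"
  shows "sigma_sets UNIV \<B> \<subseteq> range (code_eval \<B>)"
proof
  fix A assume "A \<in> sigma_sets UNIV \<B>"
  then show "A \<in> range (code_eval \<B>)"
  proof induction
    case (Basic a)
    then obtain n where "a = from_nat_into \<B> n"
      using from_nat_into_surj[OF assms] by metis
    then show ?case by (intro range_eqI[of _ _ "Code_Basic n"]) simp
  next
    case Empty
    show ?case by (rule range_eqI[of _ _ Code_Empty]) simp
  next
    case (Compl a)
    then obtain c where "a = code_eval \<B> c" by blast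
    then show ?case by (intro range_eqI[of _ _ "Code_Compl c"]) auto
  next
    case (Union a)
    then have "\<forall>i. \<exists>c. a i = code_eval \<B> c" by blast
    then obtain c where "\<And>i. a i = code_eval \<B> (c i)" by metis
    then have "(\<Union>i. a i) = code_eval \<B> (Code_Union c)" by simp
    then show ?case by blast
  qed
qed

lemma sets_borel_lepoll_real:
  "sets (borel :: 'a::second_countable_topology measure) \<lesssim> (UNIV::real set)"
proof -
  obtain \<B> :: "'a set set" where \<B>: "countable \<B>" "topological_basis \<B>"
    using ex_countable_basis by blast
  have "sets (borel :: 'a measure) = sigma_sets UNIV \<B>"
    by (subst borel_eq_countable_basis[OF \<B>]) (rule sets_measure_of, simp)
  then have "sets (borel :: 'a measure) \<lesssim> (UNIV::borel_code set)"
    using sigma_sets_subset_range_code_eval[OF \<B>(1)] by (metis subset_image_lepoll)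
  also have "\<dots> \<lesssim> (UNIV::real set)" by (rule borel_code_lepoll_real)
  finally show ?thesis .
qed

lemma ex_enumeration_uncountable_fibres:
  fixes N :: "'b set"
  assumes "N \<noteq> {}" "N \<lesssim> (UNIV::real set)"
  shows "\<exists>f::real \<Rightarrow> 'b. range f \<subseteq> N \<and> (\<forall>B\<in>N. uncountable (f -` {B}))"
proof -
  obtain g :: "real \<Rightarrow> 'b" where g: "N \<subseteq> range g" using assms(2) unfolding lepoll_iff by blast
  obtain B0 where "B0 \<in> N" using assms(1) by blast
  have "|(UNIV::real set) \<times> (UNIV::real set)| =o |UNIV::real set|"
    by (rule card_of_Times_same_infinite) (simp add: infinite_UNIV_char_0)
  then obtain h :: "real \<Rightarrow> real \<times> real" where h: "bij_betw h UNIV (UNIV \<times> UNIV)"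
    using card_of_ordIso ordIso_symmetric by blast
  \<comment> \<open>Through \<open>h\<close>, every value of \<open>g\<close> is repeated along a whole line of \<open>\<real> \<times> \<real>\<close>.\<close>
  define f where "f a = (if g (fst (h a)) \<in> N then g (fst (h a)) else B0)" for a
  have "range f \<subseteq> N" using \<open>B0 \<in> N\<close> unfolding f_def by auto
  moreover have "uncountable (f -` {B})" if "B \<in> N" for B
  proof
    assume "countable (f -` {B})"
    obtain t where "B = g t" using g \<open>B \<in> N\<close> by blast
    then have "h -` ({t} \<times> UNIV) \<subseteq> f -` {B}"
      using \<open>B \<in> N\<close> unfolding f_def by auto
    then have "countable (h ` h -` ({t} \<times> UNIV))"
      using \<open>countable (f -` {B})\<close> by (meson countable_image countable_subset)
    then have "countable ({t} \<times> (UNIV::real set))"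
      using h by (simp add: bij_betw_def surj_image_vimage_eq)
    then have "countable (snd ` ({t} \<times> (UNIV::real set)))" by (rule countable_image)
    moreover have "snd ` ({t} \<times> UNIV) = (UNIV::real set)" by auto
    ultimately show False using uncountable_UNIV_real by simp
  qed
  ultimately show ?thesis by blast
qed

lemma ex_enumeration_non_null_borel:
  assumes "standing_ideal J"
  shows "\<exists>f::real \<Rightarrow> real set. (\<forall>a. f a \<in> sets borel \<and> f a \<notin> J) \<and>
    (\<forall>B. B \<in> sets borel \<longrightarrow> B \<notin> J \<longrightarrow> uncountable (f -` {B}))"
proof -
  define N where "N = {B \<in> sets borel. B \<notin> J}"
  have "UNIV \<in> N" using assms unfolding N_def standing_ideal_def by simp
  then have "N \<noteq> {}" by blast
  have "N \<subseteq> sets borel" unfolding N_def by blast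
  then have "N \<lesssim> (UNIV::real set)"
    by (rule lepoll_trans[OF subset_imp_lepoll sets_borel_lepoll_real[where 'a=real]])
  then obtain f :: "real \<Rightarrow> real set"
    where "range f \<subseteq> N" "\<forall>B\<in>N. uncountable (f -` {B})"
    using ex_enumeration_uncountable_fibres[OF \<open>N \<noteq> {}\<close>] by blast
  then show ?thesis unfolding N_def by blast
qed

section \<open>Rational span\<close>

primrec rat_span_level :: "real set \<Rightarrow> nat \<Rightarrow> real set" where
  "rat_span_level Y 0 = {0}"
| "rat_span_level Y (Suc n) = (\<lambda>(s, q, y). s + q * y) ` (rat_span_level Y n \<times> \<rat> \<times> Y)"

definition rat_span :: "real set \<Rightarrow> real set" where
  "rat_span Y = (\<Union>n. rat_span_level Y n)"

lemma sum_in_rat_span: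
  assumes "finite G" "G \<subseteq> Y" "\<And>y. y \<in> G \<Longrightarrow> c y \<in> \<rat>"
  shows "(\<Sum>y\<in>G. c y * y) \<in> rat_span Y"
proof -
  have "(\<Sum>y\<in>G. c y * y) \<in> rat_span_level Y (card G)"
    using assms
  proof (induction G rule: finite_induct)
    case (insert a G)
    then have "((\<Sum>y\<in>G. c y * y), c a, a) \<in> rat_span_level Y (card G) \<times> \<rat> \<times> Y"
      by auto
    then have "(\<Sum>y\<in>G. c y * y) + c a * a \<in> rat_span_level Y (Suc (card G))"
      unfolding rat_span_level.simps by (rule rev_image_eqI) simp
    then show ?case
      using insert by (simp add: add.commute)
  qed simp
  then show ?thesis unfolding rat_span_def by blast
qed

lemma subset_rat_span: "Y \<subseteq> rat_span Y"
proof
  fix y assume "y \<in> Y"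
  then show "y \<in> rat_span Y"
    using sum_in_rat_span[of "{y}" Y "\<lambda>_. 1"] by simp
qed

lemma mem_rat_span_if_dependent:
  assumes "finite G" "\<And>z. z \<in> G \<Longrightarrow> c z \<in> \<rat>" "(\<Sum>z\<in>G. c z * z) = 0"
    and "y \<in> G" "c y \<noteq> 0" "{z \<in> G - {y}. c z \<noteq> 0} \<subseteq> Y"
  shows "y \<in> rat_span Y"
proof -
  let ?G' = "{z \<in> G - {y}. c z \<noteq> 0}"
  have "c y * y + (\<Sum>z\<in>G - {y}. c z * z) = 0"
    using assms(3) sum.remove[OF assms(1,4), of "\<lambda>z. c z * z"] by simp
  then have "y = (\<Sum>z\<in>G - {y}. (- c z / c y) * z)"
    using assms(5) by (simp add: sum_divide_distrib[symmetric] sum_negf field_simps)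
  also have "\<dots> = (\<Sum>z\<in>?G'. (- c z / c y) * z)"
    using assms(1) by (intro sum.mono_neutral_right) auto
  also have "\<dots> \<in> rat_span Y"
    using assms by (intro sum_in_rat_span) auto
  finally show ?thesis .
qed

lemma countable_rat_span: "countable Y \<Longrightarrow> countable (rat_span Y)"
proof -
  assume "countable Y"
  then have "countable (rat_span_level Y n)" for n
    by (induction n) (auto intro: countable_rat)
  then show ?thesis unfolding rat_span_def by blast
qed

lemma card_of_rat_span_le:
  assumes "infinite Y"
  shows "|rat_span Y| \<le>o |Y|"
proof -
  have rat_le: "|\<rat>::real set| \<le>o |Y|"
    using card_of_le_infinite_if_countable[OF countable_rat assms] .
  note Times = card_of_Times_ordLeq_infinite_Field[of "|Y|", OF _ _ _ card_of_Card_order,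
      unfolded Field_card_of, OF assms]
  have "|rat_span_level Y n| \<le>o |Y|" for n
  proof (induction n)
    case 0
    then show ?case
      using card_of_le_infinite_if_countable[OF _ assms, of "{0::real}"] by simp
  next
    case (Suc n)
    have "|rat_span_level Y n \<times> (\<rat>::real set) \<times> Y| \<le>o |Y|"
      by (intro Times Suc.IH rat_le ordLeq_refl card_of_Card_order)
    then show ?case unfolding rat_span_level.simps by (rule ordLeq_transitive[OF card_of_image])
  qed
  then show ?thesis
    unfolding rat_span_def
    by (intro card_of_UNION_ordLeq_infinite[OF assms card_of_le_infinite_if_countable[OF _ assms]])
      auto
qed

lemma card_of_rat_span_less_real:
  assumes "|Y| <o |UNIV::real set|"
  shows "|rat_span Y| <o |UNIV::real set|"
proof (cases "countable Y")
  case True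
  then show ?thesis using countable_rat_span card_of_less_real_if_countable by blast
next
  case False
  then show ?thesis
    using card_of_rat_span_le assms countable_finite ordLeq_ordLess_trans by blast
qed

lemma rat_translates_Int_not_subset_rat_span:
  assumes "standing_ideal J" "ideal_Luzin J L" "B \<in> sets borel" "B \<notin> J"
    and "|Y| <o |UNIV::real set|"
  shows "\<not> rat_translates L \<inter> B \<subseteq> rat_span Y"
proof
  assume "rat_translates L \<inter> B \<subseteq> rat_span Y"
  then have "|rat_translates L \<inter> B| <o |UNIV::real set|"
    using card_of_mono1 card_of_rat_span_less_real[OF assms(5)] ordLeq_ordLess_trans by blast
  then show False
    using card_of_rat_translates_Int[OF assms(1-4)] not_ordLess_ordIso by blast
qed

section \<open>Transfinite choice\<close>

lemma ex_transfinite_choice_avoiding: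
  fixes F :: "'a \<Rightarrow> 'b set" and C :: "'b set \<Rightarrow> 'b set"
  assumes "\<And>a Y. |Y| <o |UNIV::'a set| \<Longrightarrow> \<not> F a \<subseteq> C Y"
  shows "\<exists>x. \<forall>a. x a \<in> F a \<and> x a \<notin> C (x ` underS |UNIV::'a set| a)"
proof -
  let ?r = "|UNIV::'a set|"
  have "wf (?r - Id)"
    using card_of_Well_order[of "UNIV::'a set"] by (simp add: well_order_on_def)
  define G where "G u a = (SOME y. y \<in> F a \<and> y \<notin> C (u ` underS ?r a))" for u a
  define x where "x = wfrec (?r - Id) G"
  have "x a \<in> F a \<and> x a \<notin> C (x ` underS ?r a)" for a
  proof -
    have "|x ` underS ?r a| <o ?r"
      using card_of_image card_of_underS[OF card_of_Card_order] ordLeq_ordLess_trans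
      by (metis Field_card_of UNIV_I)
    then have "\<exists>y. y \<in> F a \<and> y \<notin> C (x ` underS ?r a)"
      using assms by blast
    moreover have "(cut x (?r - Id) a) ` underS ?r a = x ` underS ?r a"
      by (auto simp: cut_def underS_def)
    moreover have "x a = G (cut x (?r - Id) a) a"
      unfolding x_def by (rule wfrec[OF \<open>wf (?r - Id)\<close>])
    ultimately show ?thesis
      unfolding G_def using someI_ex by simp
  qed
  then show ?thesis by blast
qed

lemma inj_if_avoiding_rat_span:
  assumes "Well_order r" "Field r = UNIV" "\<And>a. x a \<notin> rat_span (x ` underS r a)"
  shows "inj x"
proof (rule injI, rule ccontr)
  fix a b assume "x a = x b" "a \<noteq> b"
  then have "a \<in> underS r b \<or> b \<in> underS r a"
    using assms(1,2) wo_rel.TOTALS[of r] by (auto simp: wo_rel_def underS_def)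
  then show False
    using assms(3) subset_rat_span \<open>x a = x b\<close> by (metis image_eqI subsetD)
qed

lemma Q_linearly_independent_if_avoiding_rat_span:
  assumes "Well_order r" "Field r = UNIV" "\<And>a. x a \<notin> rat_span (x ` underS r a)"
  shows "Q_linearly_independent (range x)"
  unfolding Q_linearly_independent_def
proof (intro allI impI ballI, rule ccontr)
  fix G c y
  assume G: "finite G" "G \<subseteq> range x" "\<forall>z\<in>G. c z \<in> \<rat>" "(\<Sum>z\<in>G. c z * z) = 0"
    and "y \<in> G" "c y \<noteq> 0"
  let ?G' = "{z \<in> G. c z \<noteq> 0}"
  \<comment> \<open>The term of the dependency with the largest index is spanned by the earlier ones.\<close>
  obtain A where A: "finite A" "?G' = x ` A"
    using finite_subset_image[of ?G' x UNIV] G(1,2) by auto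
  then obtain a where a: "a \<in> A" "\<forall>b\<in>A. (b, a) \<in> r"
    using wo_rel.finite_has_greatest[of r A] assms(1,2) \<open>y \<in> G\<close> \<open>c y \<noteq> 0\<close>
    unfolding wo_rel_def by blast
  have "{z \<in> G - {x a}. c z \<noteq> 0} \<subseteq> x ` underS r a"
    using A a by (auto simp: underS_def)
  moreover have "x a \<in> G" "c (x a) \<noteq> 0" using A a by auto
  ultimately have "x a \<in> rat_span (x ` underS r a)"
    using G by (intro mem_rat_span_if_dependent[of G c]) auto
  then show False using assms(3) by blast
qed

lemma uncountable_range_Int:
  assumes "inj x" "uncountable A" "x ` A \<subseteq> B"
  shows "uncountable (range x \<inter> B)"
proof
  assume "countable (range x \<inter> B)"
  then have "countable (x ` A)" by (rule countable_subset[rotated]) (use assms(3) in blast)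
  then show False
    using assms(1,2) countable_image_inj_on inj_on_subset by blast
qed

theorem mainTheorem12:
  fixes J :: "real set set"
  assumes "standing_ideal J"
    and "\<exists>L. ideal_Luzin J L"
  shows "\<exists>L. strong_ideal_Luzin J L \<and> Q_linearly_independent L"
proof -
  obtain L where L: "ideal_Luzin J L" using assms(2) by blast
  define S where "S = rat_translates L"
  obtain f :: "real \<Rightarrow> real set" where f: "\<And>a. f a \<in> sets borel" "\<And>a. f a \<notin> J"
    and fibres: "\<And>B. B \<in> sets borel \<Longrightarrow> B \<notin> J \<Longrightarrow> uncountable (f -` {B})"
    using ex_enumeration_non_null_borel[OF assms(1)] by blast
  have "\<not> S \<inter> f a \<subseteq> rat_span Y" if "|Y| <o |UNIV::real set|" for a Y
    unfolding S_def using rat_translates_Int_not_subset_rat_span[OF assms(1) L f that] .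
  then obtain x where x: "\<And>a. x a \<in> S \<inter> f a" "\<And>a. x a \<notin> rat_span (x ` underS |UNIV| a)"
    using ex_transfinite_choice_avoiding[of "\<lambda>a. S \<inter> f a" rat_span] by blast
  note wo = card_of_Well_order[of "UNIV::real set"] Field_card_of[of "UNIV::real set"]
  have "inj x" by (rule inj_if_avoiding_rat_span[OF wo x(2)])
  have "range x \<subseteq> S" using x(1) by blast
  have "ideal_Luzin J (range x)"
    using ideal_Luzin_rat_translates[OF assms(1) L] \<open>range x \<subseteq> S\<close>
      inj_on_image_eqpoll_self[OF \<open>inj x\<close>]
    unfolding S_def by (rule ideal_Luzin_subset)
  moreover have "uncountable (range x \<inter> B)" if "B \<in> sets borel" "B \<notin> J" for B
    using uncountable_range_Int[OF \<open>inj x\<close> fibres[OF that]] x(1) by blast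
  ultimately show ?thesis
    using Q_linearly_independent_if_avoiding_rat_span[OF wo x(2)]
    unfolding strong_ideal_Luzin_def by blast
qed

end
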